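(* Let $\Omega$ be an infinite set and $A_i\subseteq\Omega$ for $i\in\mathbb{N}$. Define: $\mathcal{F}$ the set of nonempty finite subsets of $\mathbb{N}$, $\tilde{\mathcal{F}}:=\mathcal{F}\cup\{\emptyset\}$, and for $j\in\mathbb{Z}_+$, $\mathcal{F}_j$ the set of subsets of $\mathbb{N}$ of cardinality $j$; $B_\emptyset:=\Omega\setminus\bigcup_{i\in\mathbb{N}}A_i$; $B_\infty:=\limsup A_i=\bigcap_{i\in\mathbb{N}}\bigcup_{j\ge i}A_j$; for $U\in\mathcal{F}$, $A_U:=\bigcap_{i\in U}A_i$, $B_U:=A_U\setminus\bigcup_{i\in\mathbb{N}\setminus U}A_{U\cup\{i\}}$ (the points lying in $A_i$ exactly for $i\in U$), and $A'_U:=A_U\setminus B_\infty$. Then: (1) the sets $B_\infty$ and $B_U$, $U\in\tilde{\mathcal{F}}$, form a countable partition of $\Omega$; (2) $\bigcup_{i\in\mathbb{N}}A_i=B_\infty\cup\bigcup_{U\in\mathcal{F}}B_U$; (3) $A_U=A'_U\cup(A_U\cap B_\infty)$ for $U\in\mathcal{F}$. Assume in addition that $(\Omega,\Sigma,\Pr)$ is a probability space and $A_i\in\Sigma$ for all $i$, and let $S_k:=\sum_{1\le i_1<\cdots<i_k}\Pr(A_{i_1}\cap\cdots\cap A_{i_k})\in[0,\infty]$ for $k\in\mathbb{N}$ and $T_j:=\sum_{U\in\mathcal{F}_j}\Pr(B_U)$ for $j\in\mathbb{Z}_+$. Then: (4) if $S_k<\infty$ for some $k\in\mathbb{N}$,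 then $\Pr(B_\infty)=0$; (5) $\sum_{j\in\mathbb{Z}_+}T_j\le1$, with equality if and only if $\Pr(B_\infty)=0$; (6) if $\Pr(B_\infty)=0$, then $S_k=\sum_{j\in\mathbb{Z}_+}\binom{j+k}{k}T_{j+k}\in[0,\infty]$ for each $k\in\mathbb{N}$ (in the generalized sense: $S_k=\infty$ iff the series diverges); (7) if $S_l<\infty$ for some $l\in\mathbb{N}$, then $S_k<\infty$ for every positive integer $k<l$; and if furthermore $d,r\in\mathbb{Z}_+$ and $k\in\mathbb{N}$ satisfy $2d+k+1\in[1,l]$ and $2r+k\in[1,l]$, then $$\sum_{j=0}^{2d+1}(-1)^j\binom{j+k-1}{k-1}S_{j+k}\le\Pr\Big(\bigcup_{i_1<\cdots<i_k}(A_{i_1}\cap\cdots\cap A_{i_k})\Big)\le\sum_{j=0}^{2r}(-1)^j\binom{j+k-1}{k-1}S_{j+k}.$$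
   Context: $\mathbb{N}$ denotes the positive integers and $\mathbb{Z}_+$ the nonnegative integers; $\mathcal{F}_0=\{\emptyset\}$ and $B_\emptyset$ is as defined. *)

theory Defs
  imports "HOL-Probability.Probability"
begin

text \<open>Indices range over the positive integers {1..}. Events A i for i \<ge> 1.\<close>

definition PosNat :: "nat set" where
  "PosNat = {1..}"

definition FF :: "nat set set" where
  "FF = {U. U \<subseteq> PosNat \<and> finite U \<and> U \<noteq> {}}"

definition FFt :: "nat set set" where
  "FFt = FF \<union> {{}}"

definition FFj :: "nat \<Rightarrow> nat set set" where
  "FFj j = {U. U \<subseteq> PosNat \<and> finite U \<and> card U = j}"

definition Bempty :: "'a set \<Rightarrow> (nat \<Rightarrow> 'a set) \<Rightarrow> 'a set" where
  "Bempty \<Omega> A = \<Omega> - (\<Union>i\<in>PosNat. A i)"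

definition Binf :: "(nat \<Rightarrow> 'a set) \<Rightarrow> 'a set" where
  "Binf A = (\<Inter>i\<in>PosNat. \<Union>j\<in>{i..}. A j)"

text \<open>A_U = intersection of A_i over i in U (used for U nonempty).\<close>
definition AU :: "(nat \<Rightarrow> 'a set) \<Rightarrow> nat set \<Rightarrow> 'a set" where
  "AU A U = (\<Inter>i\<in>U. A i)"

definition BU :: "'a set \<Rightarrow> (nat \<Rightarrow> 'a set) \<Rightarrow> nat set \<Rightarrow> 'a set" where
  "BU \<Omega> A U = (if U = {} then Bempty \<Omega> A
               else AU A U - (\<Union>i\<in>PosNat - U. AU A (insert i U)))"

definition AU' :: "(nat \<Rightarrow> 'a set) \<Rightarrow> nat set \<Rightarrow> 'a set" where
  "AU' A U = AU A U - Binf A"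

definition Ssum :: "'a measure \<Rightarrow> (nat \<Rightarrow> 'a set) \<Rightarrow> nat \<Rightarrow> ennreal" where
  "Ssum M A k = (\<Sum>\<^sub>\<infinity>U\<in>FFj k. emeasure M (AU A U))"

definition Tsum :: "'a measure \<Rightarrow> (nat \<Rightarrow> 'a set) \<Rightarrow> nat \<Rightarrow> ennreal" where
  "Tsum M A j = (\<Sum>\<^sub>\<infinity>U\<in>FFj j. emeasure M (BU (space M) A U))"

end

theory Submission
  imports Defs
begin

(*
  Every point w determines its index set I(w) = {i. w \<in> A i}: B_\<infinity> is the set where
  I(w) is infinite and B_U the set where I(w) = U, which gives (1)-(3). Write N(w) = |I(w)|.
  By Tonelli, S_k = E[C(N, k)] (with C(N, k) = \<infinity> on B_\<infinity>) and T_j = Pr(N = j) off B_\<infinity>.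
  Hence S_k < \<infinity> forces Pr(B_\<infinity>) = 0, (5) is countable additivity, (6) is the identity
  C(N, k) = \<Sum>_j C(j + k, k) [N = j + k], and finiteness propagates downwards because
  C(n, k) \<le> C(l, k) (1 + C(n, l)). The Bonferroni inequalities follow by integrating the pointwise
  inequalities between [k \<le> n] and the truncations \<Sum>_{j \<le> m} (-1)^j C(j+k-1, k-1) C(n, j+k):
  by Pascal's rule the truncation increases in n by C(n, k-1) (-1)^m C(n-k, m) once n \<ge> k,
  so its deviation from [k \<le> n] always has the sign (-1)^m.
*)

lemma sum_alternating_choose_Suc:
  "(\<Sum>j\<le>m. (-1)^j * of_nat (Suc n choose j) :: 'a::field_char_0) = (-1)^m * of_nat (n choose m)"
  using gbinomial_sum_lower_neg[where a = "of_nat (Suc n) :: 'a" and m = m]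
  by (simp add: binomial_gbinomial mult.commute)

lemma choose_mult_shift:
  "(j + a choose a) * (n choose (j + a)) = (n choose a) * (n - a choose j)"
proof (cases "j + a \<le> n")
  case True
  then show ?thesis using choose_mult[of a "j + a" n] by (simp add: mult.commute)
next
  case False
  then have "n choose (j + a) = 0" by simp
  moreover have "(n choose a) * (n - a choose j) = 0"
    using False by (cases "a \<le> n") auto
  ultimately show ?thesis by (metis mult_0_right)
qed

lemma choose_bounded_by_higher_choose:
  assumes "k \<le> l"
  shows "n choose k \<le> (l choose k) * (1 + (n choose l))"
proof (cases "n < l")
  case True
  then show ?thesis using binomial_right_mono[of n l k] by simp
next
  case False
  then have "(n choose l) * (l choose k) = (n choose k) * (n - k choose (l - k))"
    using assms by (intro choose_mult) auto
  moreover have "n - k choose (l - k) > 0" using False by simp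
  ultimately have "n choose k \<le> (n choose l) * (l choose k)"
    by (metis One_nat_def Suc_leI mult.right_neutral mult_le_mono2)
  then show ?thesis by (simp add: algebra_simps)
qed

definition bonferroni_sum :: "nat \<Rightarrow> nat \<Rightarrow> nat \<Rightarrow> real" where
  "bonferroni_sum k m n =
    (\<Sum>j=0..m. (-1)^j * real (j + k - 1 choose (k - 1)) * real (n choose (j + k)))"

lemma bonferroni_sum_Suc:
  assumes "k \<ge> 1"
  shows "bonferroni_sum k m (Suc n) =
    bonferroni_sum k m n + real (n choose (k - 1)) * (\<Sum>j\<le>m. (-1)^j * real (n - (k - 1) choose j))"
proof -
  have pascal: "Suc n choose (j + k) = (n choose (j + k)) + (n choose (j + (k - 1)))" for j
    using assms by (cases k) auto
  have shift: "real (j + k - 1 choose (k - 1)) * real (n choose (j + (k - 1))) =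
      real (n choose (k - 1)) * real (n - (k - 1) choose j)" for j
    using choose_mult_shift[of j "k - 1" n] assms by (metis Nat.add_diff_assoc of_nat_mult)
  have "(\<Sum>j=0..m. (-1)^j * real (j + k - 1 choose (k - 1)) * real (n choose (j + (k - 1)))) =
      (\<Sum>j\<le>m. real (n choose (k - 1)) * ((-1)^j * real (n - (k - 1) choose j)))"
    unfolding atLeast0AtMost by (intro sum.cong refl) (metis shift mult.assoc mult.left_commute)
  then show ?thesis
    unfolding bonferroni_sum_def pascal of_nat_add distrib_left sum.distrib
    by (simp add: sum_distrib_left)
qed

lemma bonferroni_sum_remainder_sign:
  assumes k: "k \<ge> 1"
  shows "(-1)^m * (bonferroni_sum k m n - of_bool (k \<le> n)) \<ge> 0"
proof (induction n)
  case 0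
  have "bonferroni_sum k m 0 = 0" unfolding bonferroni_sum_def using k by (intro sum.neutral) auto
  then show ?case using k by simp
next
  case (Suc n)
  define D where "D = real (n choose (k - 1)) * (\<Sum>j\<le>m. (-1)^j * real (n - (k - 1) choose j))"
  have step: "bonferroni_sum k m (Suc n) = bonferroni_sum k m n + D"
    unfolding D_def using k by (rule bonferroni_sum_Suc)
  consider "k \<le> n" | "k = Suc n" | "Suc n < k" by linarith
  then show ?case
  proof cases
    case 1
    then have "n - (k - 1) = Suc (n - k)" using k by auto
    then have "(-1)^m * D = real (n choose (k - 1)) * real (n - k choose m)"
      unfolding D_def by (simp add: sum_alternating_choose_Suc)
    moreover have "(-1)^m * (bonferroni_sum k m (Suc n) - 1) =
        (-1)^m * (bonferroni_sum k m n - 1) + (-1)^m * D"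
      using step by (simp add: algebra_simps)
    ultimately show ?thesis using Suc 1 by simp
  next
    case 2
    have "(\<Sum>j\<le>m. (-1)^j * real (0 choose j)) = 1" by (induction m) auto
    then have "D = 1" unfolding D_def using 2 by simp
    then show ?thesis using Suc 2 step by simp
  next
    case 3
    then have "n < k - 1" by linarith
    then have "D = 0" unfolding D_def by simp
    then show ?thesis using Suc 3 step by simp
  qed
qed

lemma (in prob_space) bonferroni_binomial_moments:
  fixes N :: "'a \<Rightarrow> nat"
  assumes N: "N \<in> measurable M (count_space UNIV)" and k: "k \<ge> 1"
    and int: "\<And>j. j \<le> m \<Longrightarrow> integrable M (\<lambda>w. real (N w choose (j + k)))"
  shows "odd m \<Longrightarrow> (\<Sum>j=0..m. (-1)^j * real (j + k - 1 choose (k - 1)) *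
      expectation (\<lambda>w. real (N w choose (j + k)))) \<le> prob {w\<in>space M. k \<le> N w}"
    and "even m \<Longrightarrow> prob {w\<in>space M. k \<le> N w} \<le> (\<Sum>j=0..m. (-1)^j *
      real (j + k - 1 choose (k - 1)) * expectation (\<lambda>w. real (N w choose (j + k))))"
proof -
  have meas: "(\<lambda>w. f (N w) :: real) \<in> borel_measurable M" for f
    by (rule measurable_compose[OF N]) simp
  have int_sum: "integrable M (\<lambda>w. bonferroni_sum k m (N w))"
    unfolding bonferroni_sum_def
    by (intro Bochner_Integration.integrable_sum integrable_mult_right int) simp
  have "expectation (\<lambda>w. bonferroni_sum k m (N w)) = (\<Sum>j=0..m.
      expectation (\<lambda>w. (-1)^j * real (j + k - 1 choose (k - 1)) * real (N w choose (j + k))))"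
    unfolding bonferroni_sum_def
    by (rule Bochner_Integration.integral_sum) (simp add: int)
  then have sum_eq: "(\<Sum>j=0..m. (-1)^j * real (j + k - 1 choose (k - 1)) *
      expectation (\<lambda>w. real (N w choose (j + k)))) = expectation (\<lambda>w. bonferroni_sum k m (N w))"
    by simp
  have "prob {w\<in>space M. k \<le> N w} = expectation (indicator {w\<in>space M. k \<le> N w})"
    by (simp add: Int_absorb2)
  also have "\<dots> = expectation (\<lambda>w. of_bool (k \<le> N w))"
    by (rule Bochner_Integration.integral_cong) (simp_all add: indicator_def)
  finally have prob_eq: "prob {w\<in>space M. k \<le> N w} = expectation (\<lambda>w. of_bool (k \<le> N w))" .
  have int_ind: "integrable M (\<lambda>w. of_bool (k \<le> N w) :: real)"
    by (intro integrable_const_bound[where B = 1] meas) simp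
  show "odd m \<Longrightarrow> (\<Sum>j=0..m. (-1)^j * real (j + k - 1 choose (k - 1)) *
      expectation (\<lambda>w. real (N w choose (j + k)))) \<le> prob {w\<in>space M. k \<le> N w}"
    unfolding sum_eq prob_eq
    using bonferroni_sum_remainder_sign[OF k, of m]
    by (intro integral_mono int_sum int_ind) (simp add: zero_le_mult_iff)
  show "even m \<Longrightarrow> prob {w\<in>space M. k \<le> N w} \<le> (\<Sum>j=0..m. (-1)^j *
      real (j + k - 1 choose (k - 1)) * expectation (\<lambda>w. real (N w choose (j + k))))"
    unfolding sum_eq prob_eq
    using bonferroni_sum_remainder_sign[OF k, of m]
    by (intro integral_mono int_sum int_ind) simp
qed

definition index_set :: "(nat \<Rightarrow> 'a set) \<Rightarrow> 'a \<Rightarrow> nat set" where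
  "index_set A w = {i\<in>PosNat. w \<in> A i}"

lemma index_set_subset_PosNat: "index_set A w \<subseteq> PosNat"
  unfolding index_set_def by auto

lemma Binf_iff_infinite_index_set: "w \<in> Binf A \<longleftrightarrow> infinite (index_set A w)"
proof -
  have "w \<in> Binf A \<longleftrightarrow> (\<forall>m. \<exists>n\<ge>m. n \<in> index_set A w)"
  proof
    assume w: "w \<in> Binf A"
    show "\<forall>m. \<exists>n\<ge>m. n \<in> index_set A w"
    proof
      fix m
      have "max m 1 \<in> PosNat" unfolding PosNat_def by simp
      then obtain n where "n \<ge> max m 1" "w \<in> A n" using w unfolding Binf_def by blast
      then show "\<exists>n\<ge>m. n \<in> index_set A w" unfolding index_set_def PosNat_def by auto
    qed
  next
    assume "\<forall>m. \<exists>n\<ge>m. n \<in> index_set A w"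
    then show "w \<in> Binf A" unfolding Binf_def index_set_def by blast
  qed
  then show ?thesis by (simp add: infinite_nat_iff_unbounded_le)
qed

lemma AU_iff_subset_index_set: "U \<subseteq> PosNat \<Longrightarrow> w \<in> AU A U \<longleftrightarrow> U \<subseteq> index_set A w"
  unfolding AU_def index_set_def by auto

lemma finite_index_set_in_FF:
  "finite (index_set A w) \<Longrightarrow> index_set A w \<noteq> {} \<Longrightarrow> index_set A w \<in> FF"
  using index_set_subset_PosNat[of A w] unfolding FF_def by auto

lemma finite_index_set_in_FFt: "finite (index_set A w) \<Longrightarrow> index_set A w \<in> FFt"
  using finite_index_set_in_FF[of A w] unfolding FFt_def by auto

lemma FFt_subset_PosNat: "U \<in> FFt \<Longrightarrow> U \<subseteq> PosNat"
  unfolding FFt_def FF_def by auto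

lemma countable_FFt: "countable FFt"
  by (rule countable_subset[OF _ countable_Collect_finite]) (auto simp: FFt_def FF_def)

lemma countable_FFj: "countable (FFj k)"
  by (rule countable_subset[OF _ countable_Collect_finite]) (auto simp: FFj_def)

context
  fixes \<Omega> :: "'a set" and A :: "nat \<Rightarrow> 'a set"
  assumes A_subset: "\<And>i. i \<in> PosNat \<Longrightarrow> A i \<subseteq> \<Omega>"
begin

lemma BU_eq_index_set_fibre:
  assumes "U \<subseteq> PosNat"
  shows "BU \<Omega> A U = {w\<in>\<Omega>. index_set A w = U}"
  using assms A_subset unfolding BU_def Bempty_def AU_def index_set_def by (auto 4 3)

lemma mem_BU_index_set: "w \<in> \<Omega> \<Longrightarrow> w \<in> BU \<Omega> A (index_set A w)"
  by (simp add: BU_eq_index_set_fibre index_set_subset_PosNat)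

lemma Binf_subset: "Binf A \<subseteq> \<Omega>"
  using A_subset unfolding Binf_def PosNat_def by blast

lemma disjoint_family_on_BU: "disjoint_family_on (BU \<Omega> A) FFt"
  unfolding disjoint_family_on_def
proof (intro ballI impI)
  fix U V assume "U \<in> FFt" "V \<in> FFt" "U \<noteq> V"
  then show "BU \<Omega> A U \<inter> BU \<Omega> A V = {}"
    using BU_eq_index_set_fibre FFt_subset_PosNat by auto
qed

lemma BU_Int_Binf:
  assumes "U \<in> FFt"
  shows "BU \<Omega> A U \<inter> Binf A = {}"
proof -
  have "finite U" using assms unfolding FFt_def FF_def by auto
  then show ?thesis
    using BU_eq_index_set_fibre[OF FFt_subset_PosNat[OF assms]]
    by (auto simp: Binf_iff_infinite_index_set)
qed

lemma Binf_Un_UN_BU: "Binf A \<union> (\<Union>U\<in>FFt. BU \<Omega> A U) = \<Omega>"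
proof (rule equalityI)
  have "BU \<Omega> A U \<subseteq> \<Omega>" if "U \<in> FFt" for U
    using BU_eq_index_set_fibre[OF FFt_subset_PosNat[OF that]] by auto
  then show "Binf A \<union> (\<Union>U\<in>FFt. BU \<Omega> A U) \<subseteq> \<Omega>"
    using Binf_subset by blast
next
  show "\<Omega> \<subseteq> Binf A \<union> (\<Union>U\<in>FFt. BU \<Omega> A U)"
  proof
    fix w assume w: "w \<in> \<Omega>"
    show "w \<in> Binf A \<union> (\<Union>U\<in>FFt. BU \<Omega> A U)"
    proof (cases "finite (index_set A w)")
      case True
      then have "index_set A w \<in> FFt" by (rule finite_index_set_in_FFt)
      then show ?thesis using mem_BU_index_set[OF w] by blast
    qed (simp add: Binf_iff_infinite_index_set)
  qed
qed

lemma UN_A_eq_Binf_Un_UN_BU: "(\<Union>i\<in>PosNat. A i) = Binf A \<union> (\<Union>U\<in>FF. BU \<Omega> A U)"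
proof (rule equalityI)
  show "(\<Union>i\<in>PosNat. A i) \<subseteq> Binf A \<union> (\<Union>U\<in>FF. BU \<Omega> A U)"
  proof
    fix w assume "w \<in> (\<Union>i\<in>PosNat. A i)"
    then have w: "w \<in> \<Omega>" and ne: "index_set A w \<noteq> {}"
      using A_subset unfolding index_set_def by auto
    show "w \<in> Binf A \<union> (\<Union>U\<in>FF. BU \<Omega> A U)"
    proof (cases "finite (index_set A w)")
      case True
      then have "index_set A w \<in> FF" using ne by (rule finite_index_set_in_FF)
      then show ?thesis using mem_BU_index_set[OF w] by blast
    qed (simp add: Binf_iff_infinite_index_set)
  qed
next
  have "index_set A w \<noteq> {}" if "w \<in> Binf A \<union> (\<Union>U\<in>FF. BU \<Omega> A U)" for w
    using that
  proof
    assume "w \<in> Binf A"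
    then show ?thesis by (auto simp: Binf_iff_infinite_index_set)
  next
    assume "w \<in> (\<Union>U\<in>FF. BU \<Omega> A U)"
    then obtain U where "U \<in> FF" "w \<in> BU \<Omega> A U" by blast
    then show ?thesis using BU_eq_index_set_fibre unfolding FF_def by auto
  qed
  then show "Binf A \<union> (\<Union>U\<in>FF. BU \<Omega> A U) \<subseteq> (\<Union>i\<in>PosNat. A i)"
    unfolding index_set_def by blast
qed

end

lemma infsum_ennreal_eq_nn_integral_count_space:
  fixes f :: "'b \<Rightarrow> ennreal"
  assumes "countable X"
  shows "infsum f X = (\<integral>\<^sup>+x. f x \<partial>count_space X)"
proof (cases "finite X")
  case True
  then show ?thesis by (simp add: nn_integral_count_space_finite)
next
  case False
  let ?g = "from_nat_into X"
  have g: "bij_betw ?g UNIV X" using bij_betw_from_nat_into[OF assms False] .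
  have "infsum f X = infsum (\<lambda>n. f (?g n)) UNIV"
    by (rule infsum_reindex_bij_betw[OF g, symmetric])
  also have "\<dots> = (\<Sum>n. f (?g n))"
  proof -
    have "((\<lambda>n. f (?g n)) has_sum infsum (\<lambda>n. f (?g n)) UNIV) UNIV"
      by (rule has_sum_infsum, rule nonneg_summable_on_complete) simp
    then have "(\<lambda>n. f (?g n)) sums infsum (\<lambda>n. f (?g n)) UNIV"
      by (rule has_sum_imp_sums)
    then show ?thesis by (simp add: sums_iff)
  qed
  also have "\<dots> = (\<integral>\<^sup>+n. f (?g n) \<partial>count_space UNIV)"
    by (simp add: nn_integral_count_space_nat)
  also have "\<dots> = (\<integral>\<^sup>+x. f x \<partial>count_space X)"
    by (rule nn_integral_bij_count_space[OF g])
  finally show ?thesis .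
qed

lemma infinite_subsets_of_card:
  assumes "infinite I" "k \<ge> 1"
  shows "infinite {U. U \<subseteq> I \<and> finite U \<and> card U = k}"
proof -
  obtain F where F: "F \<subseteq> I" "finite F" "card F = k - 1"
    using infinite_arbitrarily_large[OF assms(1)] by blast
  have "(\<lambda>i. insert i F) ` (I - F) \<subseteq> {U. U \<subseteq> I \<and> finite U \<and> card U = k}"
    using F assms(2) by auto
  moreover have "inj_on (\<lambda>i. insert i F) (I - F)"
    unfolding inj_on_def by blast
  moreover have "infinite (I - F)"
    using assms(1) F(2) by simp
  ultimately show ?thesis
    by (meson finite_imageD finite_subset)
qed

lemma nn_integral_count_space_indicator_AU:
  assumes "k \<ge> 1"
  shows "(\<integral>\<^sup>+U. indicator (AU A U) w \<partial>count_space (FFj k)) =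
    (if finite (index_set A w) then of_nat (card (index_set A w) choose k) else \<infinity>)"
proof -
  let ?I = "index_set A w"
  let ?S = "{U. U \<subseteq> ?I \<and> finite U \<and> card U = k}"
  have S: "?S = {U\<in>FFj k. U \<subseteq> ?I}"
    using index_set_subset_PosNat[of A w] unfolding FFj_def by auto
  have "(\<integral>\<^sup>+U. indicator (AU A U) w \<partial>count_space (FFj k)) =
      (\<integral>\<^sup>+U. indicator ?S U \<partial>count_space (FFj k))"
    unfolding S
    by (intro nn_integral_cong) (auto simp: FFj_def AU_iff_subset_index_set indicator_def)
  also have "\<dots> = emeasure (count_space (FFj k)) ?S"
    unfolding S by (rule nn_integral_indicator) simp
  also have "\<dots> = (if finite ?S then of_nat (card ?S) else \<infinity>)"
    unfolding S by (rule emeasure_count_space) simp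
  also have "\<dots> = (if finite ?I then of_nat (card ?I choose k) else \<infinity>)"
  proof (cases "finite ?I")
    case True
    then have "?S = {U. U \<subseteq> ?I \<and> card U = k}" by (auto intro: finite_subset)
    with True show ?thesis by (simp add: n_subsets)
  qed (use infinite_subsets_of_card[OF _ assms] in auto)
  finally show ?thesis .
qed

lemma suminf_choose_mult_of_bool:
  "(\<Sum>j. of_nat (j + k choose k) * of_bool (n = j + k)) = (of_nat (n choose k) :: ennreal)"
proof (cases "k \<le> n")
  case True
  have "(\<lambda>j. of_nat (j + k choose k) * of_bool (n = j + k)) =
      (\<lambda>j. if j = n - k then of_nat (n choose k) else (0::ennreal))"
    using True by (auto simp: fun_eq_iff)
  then show ?thesis
    using sums_single[of "n - k" "\<lambda>_. of_nat (n choose k) :: ennreal"] by (simp add: sums_iff)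
qed simp

locale event_sequence = prob_space M for M :: "'a measure" +
  fixes A :: "nat \<Rightarrow> 'a set"
  assumes sets_A: "\<And>i. i \<in> PosNat \<Longrightarrow> A i \<in> sets M"
begin

lemma A_subset_space: "i \<in> PosNat \<Longrightarrow> A i \<subseteq> space M"
  using sets_A sets.sets_into_space by blast

text \<open>As card is 0 on infinite sets, occurrences w counts the events containing w only
  for w outside Binf A.\<close>

definition occurrences :: "'a \<Rightarrow> nat" where
  "occurrences w = card (index_set A w)"

lemma sets_index_set_fibre: "{w\<in>space M. index_set A w = U} \<in> sets M"
proof (cases "U \<subseteq> PosNat")
  case True
  have "{w\<in>space M. index_set A w = U} = {w\<in>space M. \<forall>i\<in>PosNat. w \<in> A i \<longleftrightarrow> i \<in> U}"
    using True unfolding index_set_def by auto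
  also have "\<dots> \<in> sets M"
  proof (rule sets.sets_Collect_countable_All')
    fix i assume i: "i \<in> PosNat"
    have "{w\<in>space M. w \<in> A i \<longleftrightarrow> i \<in> U} = (if i \<in> U then A i else space M - A i)"
      using A_subset_space[OF i] by auto
    then show "{w\<in>space M. w \<in> A i \<longleftrightarrow> i \<in> U} \<in> sets M"
      using sets_A[OF i] by auto
  qed simp
  finally show ?thesis .
next
  case False
  then have "index_set A w \<noteq> U" for w
    using index_set_subset_PosNat[of A w] by blast
  then have "{w\<in>space M. index_set A w = U} = {}"
    by blast
  then show ?thesis by (metis sets.empty_sets)
qed

lemma sets_Binf: "Binf A \<in> sets M"
proof -
  have "(\<Union>j\<in>{i..}. A j) \<in> sets M" if "i \<in> PosNat" for i
    using that sets_A unfolding PosNat_def by (intro sets.countable_UN'') auto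
  then show ?thesis
    unfolding Binf_def by (intro sets.countable_INT') (auto simp: PosNat_def)
qed

lemma sets_AU: "U \<subseteq> PosNat \<Longrightarrow> U \<noteq> {} \<Longrightarrow> AU A U \<in> sets M"
  unfolding AU_def using sets_A by (intro sets.countable_INT') auto

definition level_set :: "nat \<Rightarrow> 'a set" where
  "level_set j = {w\<in>space M - Binf A. occurrences w = j}"

lemma level_set_eq_UN_fibre: "level_set j = (\<Union>U\<in>FFj j. {w\<in>space M. index_set A w = U})"
  using index_set_subset_PosNat[of A]
  by (auto simp: level_set_def occurrences_def FFj_def Binf_iff_infinite_index_set)

lemma sets_level_set: "level_set j \<in> sets M"
  unfolding level_set_eq_UN_fibre
  by (rule sets.countable_UN''[OF countable_FFj sets_index_set_fibre])

lemma measurable_occurrences: "occurrences \<in> measurable M (count_space UNIV)"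
  unfolding measurable_count_space_eq2_countable
proof (intro conjI ballI)
  fix n :: nat
  have "occurrences -` {n} \<inter> space M = level_set n \<union> (if n = 0 then Binf A else {})"
    unfolding level_set_def using Binf_subset[where \<Omega> = "space M" and A = A, OF A_subset_space]
    by (auto simp: occurrences_def Binf_iff_infinite_index_set dest: card_ge_0_finite)
  then show "occurrences -` {n} \<inter> space M \<in> sets M"
    using sets_level_set sets_Binf by simp
qed auto

lemma borel_measurable_occurrences_comp:
  "(\<lambda>w. f (occurrences w)) \<in> borel_measurable M"
  by (rule measurable_compose[OF measurable_occurrences]) simp

lemma Tsum_eq_emeasure_level_set:
  "Tsum M A j = emeasure M (level_set j)"
proof -
  have "Tsum M A j = (\<integral>\<^sup>+U. emeasure M (BU (space M) A U) \<partial>count_space (FFj j))"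
    unfolding Tsum_def by (rule infsum_ennreal_eq_nn_integral_count_space[OF countable_FFj])
  also have "\<dots> = (\<integral>\<^sup>+U. emeasure M {w\<in>space M. index_set A w = U} \<partial>count_space (FFj j))"
    by (intro nn_integral_cong)
      (simp add: FFj_def BU_eq_index_set_fibre[where \<Omega> = "space M" and A = A, OF A_subset_space])
  also have "\<dots> = emeasure M (\<Union>U\<in>FFj j. {w\<in>space M. index_set A w = U})"
    by (rule emeasure_UN_countable[symmetric])
      (auto simp: sets_index_set_fibre countable_FFj disjoint_family_on_def)
  finally show ?thesis
    by (simp only: level_set_eq_UN_fibre)
qed

lemma Ssum_eq_nn_integral:
  assumes k: "k \<ge> 1"
  shows "Ssum M A k =
    (\<integral>\<^sup>+w. (if finite (index_set A w) then of_nat (occurrences w choose k) else \<infinity>) \<partial>M)"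
proof -
  have sets: "AU A U \<in> sets M" if "U \<in> FFj k" for U
    using that k by (intro sets_AU) (auto simp: FFj_def)
  have "Ssum M A k = (\<integral>\<^sup>+U. emeasure M (AU A U) \<partial>count_space (FFj k))"
    unfolding Ssum_def by (rule infsum_ennreal_eq_nn_integral_count_space[OF countable_FFj])
  also have "\<dots> = (\<integral>\<^sup>+U. (\<integral>\<^sup>+w. indicator (AU A U) w \<partial>M) \<partial>count_space (FFj k))"
    by (intro nn_integral_cong) (simp add: sets)
  also have "\<dots> = (\<integral>\<^sup>+w. (\<integral>\<^sup>+U. indicator (AU A U) w \<partial>count_space (FFj k)) \<partial>M)"
    by (rule nn_integral_count_space_nn_integral[symmetric])
      (auto simp: countable_FFj sets intro!: borel_measurable_indicator)
  also have "\<dots> = (\<integral>\<^sup>+w. (if finite (index_set A w) then of_nat (occurrences w choose k) else \<infinity>) \<partial>M)"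
    unfolding occurrences_def by (intro nn_integral_cong nn_integral_count_space_indicator_AU k)
  finally show ?thesis .
qed

lemma Binf_null_if_Ssum_finite:
  assumes k: "k \<ge> 1" and fin: "Ssum M A k < \<infinity>"
  shows "emeasure M (Binf A) = 0"
proof -
  have "\<infinity> * emeasure M (Binf A) = (\<integral>\<^sup>+w. \<infinity> * indicator (Binf A) w \<partial>M)"
    by (rule nn_integral_cmult_indicator[symmetric]) (rule sets_Binf)
  also have "\<dots> \<le> Ssum M A k"
    unfolding Ssum_eq_nn_integral[OF k]
    by (rule nn_integral_mono) (auto simp: indicator_def Binf_iff_infinite_index_set)
  finally show ?thesis
    using fin by (auto simp: ennreal_top_mult split: if_splits)
qed

lemma AE_not_in_Binf: "emeasure M (Binf A) = 0 \<Longrightarrow> AE w in M. w \<notin> Binf A"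
  by (rule AE_not_in) (simp add: null_sets_def sets_Binf)

lemma Ssum_eq_nn_integral_occurrences:
  assumes "k \<ge> 1" "emeasure M (Binf A) = 0"
  shows "Ssum M A k = (\<integral>\<^sup>+w. of_nat (occurrences w choose k) \<partial>M)"
  unfolding Ssum_eq_nn_integral[OF assms(1)]
  by (rule nn_integral_cong_AE)
    (use AE_not_in_Binf[OF assms(2)] in \<open>eventually_elim, simp add: Binf_iff_infinite_index_set\<close>)

lemma suminf_Tsum: "(\<Sum>j. Tsum M A j) = 1 - emeasure M (Binf A)"
proof -
  have "(\<Sum>j. Tsum M A j) = emeasure M (\<Union>j. level_set j)"
    unfolding Tsum_eq_emeasure_level_set
    by (rule suminf_emeasure)
      (auto simp only: sets_level_set, auto simp: disjoint_family_on_def level_set_def)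
  also have "(\<Union>j. level_set j) = space M - Binf A"
    unfolding level_set_def by blast
  finally show ?thesis
    by (simp add: emeasure_compl sets_Binf emeasure_space_1)
qed

lemma suminf_Tsum_le_one: "(\<Sum>j. Tsum M A j) \<le> 1"
  by (simp add: suminf_Tsum)

lemma suminf_Tsum_eq_one_iff: "(\<Sum>j. Tsum M A j) = 1 \<longleftrightarrow> emeasure M (Binf A) = 0"
proof -
  have "1 - emeasure M (Binf A) = ennreal (1 - prob (Binf A))"
    by (simp add: emeasure_eq_measure ennreal_minus[symmetric])
  then show ?thesis
    by (simp add: suminf_Tsum emeasure_eq_measure)
qed

lemma Ssum_eq_suminf_Tsum:
  assumes k: "k \<ge> 1" and null: "emeasure M (Binf A) = 0"
  shows "Ssum M A k = (\<Sum>j. of_nat (j + k choose k) * Tsum M A (j + k))"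
proof -
  have "(\<Sum>j. of_nat (j + k choose k) * Tsum M A (j + k)) =
      (\<Sum>j. \<integral>\<^sup>+w. of_nat (j + k choose k) * indicator (level_set (j + k)) w \<partial>M)"
    by (simp add: Tsum_eq_emeasure_level_set nn_integral_cmult_indicator sets_level_set)
  also have "\<dots> = (\<integral>\<^sup>+w. (\<Sum>j. of_nat (j + k choose k) * indicator (level_set (j + k)) w) \<partial>M)"
    by (intro nn_integral_suminf[symmetric] borel_measurable_times_ennreal
        borel_measurable_indicator sets_level_set borel_measurable_const)
  also have "\<dots> = (\<integral>\<^sup>+w. of_nat (occurrences w choose k) \<partial>M)"
  proof (rule nn_integral_cong_AE)
    show "AE w in M. (\<Sum>j. of_nat (j + k choose k) * indicator (level_set (j + k)) w) =
        (of_nat (occurrences w choose k) :: ennreal)"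
      using AE_not_in_Binf[OF null] AE_space
    proof eventually_elim
      case (elim w)
      then have "indicator (level_set (j + k)) w = (of_bool (occurrences w = j + k) :: ennreal)"
        for j
        by (simp add: level_set_def)
      then show ?case
        using suminf_choose_mult_of_bool[of k "occurrences w"] by simp
    qed
  qed
  finally show ?thesis
    using Ssum_eq_nn_integral_occurrences[OF k null] by simp
qed

lemma Ssum_finite_downward:
  assumes fin: "Ssum M A l < \<infinity>" and k: "1 \<le> k" "k \<le> l"
  shows "Ssum M A k < \<infinity>"
proof -
  have "1 \<le> l" using k by simp
  then have null: "emeasure M (Binf A) = 0"
    using fin by (rule Binf_null_if_Ssum_finite)
  have "Ssum M A k \<le> (\<integral>\<^sup>+w. of_nat (l choose k) * (1 + of_nat (occurrences w choose l)) \<partial>M)"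
    unfolding Ssum_eq_nn_integral_occurrences[OF k(1) null]
  proof (rule nn_integral_mono)
    fix w
    have "occurrences w choose k \<le> (l choose k) * (1 + (occurrences w choose l))"
      using k(2) by (rule choose_bounded_by_higher_choose)
    then have "(of_nat (occurrences w choose k) :: ennreal) \<le>
        of_nat ((l choose k) * (1 + (occurrences w choose l)))"
      by (rule of_nat_mono)
    then show "(of_nat (occurrences w choose k) :: ennreal) \<le>
        of_nat (l choose k) * (1 + of_nat (occurrences w choose l))"
      by (simp add: distrib_left)
  qed
  also have "\<dots> = of_nat (l choose k) * (\<integral>\<^sup>+w. 1 + of_nat (occurrences w choose l) \<partial>M)"
    by (intro nn_integral_cmult borel_measurable_occurrences_comp)
  also have "\<dots> = of_nat (l choose k) * ((\<integral>\<^sup>+w. 1 \<partial>M) + (\<integral>\<^sup>+w. of_nat (occurrences w choose l) \<partial>M))"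
    by (subst nn_integral_add) (auto intro: borel_measurable_occurrences_comp)
  also have "\<dots> = of_nat (l choose k) * (1 + Ssum M A l)"
    using Ssum_eq_nn_integral_occurrences[OF \<open>1 \<le> l\<close> null] by (simp add: emeasure_space_1)
  also have "\<dots> < \<infinity>"
    using fin by (simp add: ennreal_mult_less_top of_nat_less_top)
  finally show ?thesis .
qed

lemma Ssum_as_expectation:
  assumes k: "k \<ge> 1" and fin: "Ssum M A k < \<infinity>"
  shows "integrable M (\<lambda>w. real (occurrences w choose k))"
    and "enn2real (Ssum M A k) = expectation (\<lambda>w. real (occurrences w choose k))"
proof -
  have Ssum_eq: "Ssum M A k = (\<integral>\<^sup>+w. ennreal (real (occurrences w choose k)) \<partial>M)"
    using Ssum_eq_nn_integral_occurrences[OF k Binf_null_if_Ssum_finite[OF k fin]]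
    by (simp add: ennreal_of_nat_eq_real_of_nat)
  have meas: "(\<lambda>w. real (occurrences w choose k)) \<in> borel_measurable M"
    by (rule borel_measurable_occurrences_comp)
  show int: "integrable M (\<lambda>w. real (occurrences w choose k))"
    using fin by (intro integrableI_nn_integral_finite[OF meas, of "enn2real (Ssum M A k)"])
      (auto simp: Ssum_eq[symmetric])
  show "enn2real (Ssum M A k) = expectation (\<lambda>w. real (occurrences w choose k))"
    unfolding Ssum_eq by (simp add: nn_integral_eq_integral[OF int])
qed

lemma mem_UN_AU_iff:
  assumes fin: "finite (index_set A w)"
  shows "w \<in> (\<Union>U\<in>FFj k. AU A U) \<longleftrightarrow> k \<le> occurrences w"
proof
  assume "w \<in> (\<Union>U\<in>FFj k. AU A U)"
  then obtain U where U: "U \<in> FFj k" "w \<in> AU A U" by blast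
  then have "U \<subseteq> index_set A w" "card U = k"
    unfolding FFj_def by (auto simp: AU_iff_subset_index_set)
  then show "k \<le> occurrences w"
    unfolding occurrences_def using card_mono[OF fin] by auto
next
  assume "k \<le> occurrences w"
  then obtain U where U: "U \<subseteq> index_set A w" "card U = k" "finite U"
    unfolding occurrences_def by (rule obtain_subset_with_card_n)
  moreover have "U \<subseteq> PosNat"
    using U(1) index_set_subset_PosNat by (rule subset_trans)
  ultimately have "U \<in> FFj k" "w \<in> AU A U"
    unfolding FFj_def by (auto simp: AU_iff_subset_index_set)
  then show "w \<in> (\<Union>U\<in>FFj k. AU A U)" by blast
qed

lemma measure_UN_AU_eq_prob_occurrences_ge:
  assumes k: "k \<ge> 1" and null: "emeasure M (Binf A) = 0"
  shows "measure M (\<Union>U\<in>FFj k. AU A U) = prob {w\<in>space M. k \<le> occurrences w}"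
proof -
  have X: "(\<Union>U\<in>FFj k. AU A U) \<in> sets M"
    using k by (intro sets.countable_UN''[OF countable_FFj] sets_AU) (auto simp: FFj_def)
  have Y: "{w\<in>space M. k \<le> occurrences w} \<in> sets M"
    using measurable_sets[OF measurable_occurrences, of "{k..}"]
    by (simp add: vimage_def Int_def conj_commute)
  have "AE w in M. w \<in> (\<Union>U\<in>FFj k. AU A U) \<longleftrightarrow> w \<in> {w\<in>space M. k \<le> occurrences w}"
    using AE_not_in_Binf[OF null] AE_space
  proof eventually_elim
    case (elim w)
    then show ?case
      using mem_UN_AU_iff[of w k] by (simp add: Binf_iff_infinite_index_set)
  qed
  then have "emeasure M (\<Union>U\<in>FFj k. AU A U) = emeasure M {w\<in>space M. k \<le> occurrences w}"
    using X Y by (rule emeasure_eq_AE)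
  then show ?thesis
    by (simp add: measure_def)
qed

lemma bonferroni_inequalities:
  assumes k: "k \<ge> 1" and fin: "Ssum M A l < \<infinity>" and ml: "m + k \<le> l"
  shows "odd m \<Longrightarrow> (\<Sum>j=0..m. (-1)^j * real (j + k - 1 choose (k - 1)) * enn2real (Ssum M A (j + k)))
      \<le> measure M (\<Union>U\<in>FFj k. AU A U)"
    and "even m \<Longrightarrow> measure M (\<Union>U\<in>FFj k. AU A U)
      \<le> (\<Sum>j=0..m. (-1)^j * real (j + k - 1 choose (k - 1)) * enn2real (Ssum M A (j + k)))"
proof -
  have fin_j: "Ssum M A (j + k) < \<infinity>" if "j \<le> m" for j
    using Ssum_finite_downward[OF fin] that k ml by simp
  note expect = Ssum_as_expectation[OF _ fin_j]
  have null: "emeasure M (Binf A) = 0"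
    using k fin_j[of 0] by (intro Binf_null_if_Ssum_finite[of k]) auto
  have sum_eq: "(\<Sum>j=0..m. (-1)^j * real (j + k - 1 choose (k - 1)) * enn2real (Ssum M A (j + k))) =
      (\<Sum>j=0..m. (-1)^j * real (j + k - 1 choose (k - 1)) *
        expectation (\<lambda>w. real (occurrences w choose (j + k))))"
    using k by (intro sum.cong) (simp_all add: expect(2))
  show "odd m \<Longrightarrow> (\<Sum>j=0..m. (-1)^j * real (j + k - 1 choose (k - 1)) * enn2real (Ssum M A (j + k)))
      \<le> measure M (\<Union>U\<in>FFj k. AU A U)"
    unfolding sum_eq measure_UN_AU_eq_prob_occurrences_ge[OF k null]
    using k by (intro bonferroni_binomial_moments(1)[OF measurable_occurrences k] expect(1)) auto
  show "even m \<Longrightarrow> measure M (\<Union>U\<in>FFj k. AU A U)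
      \<le> (\<Sum>j=0..m. (-1)^j * real (j + k - 1 choose (k - 1)) * enn2real (Ssum M A (j + k)))"
    unfolding sum_eq measure_UN_AU_eq_prob_occurrences_ge[OF k null]
    using k by (intro bonferroni_binomial_moments(2)[OF measurable_occurrences k] expect(1)) auto
qed

end

theorem proposition3p2:
  fixes \<Omega> :: "'a set" and A :: "nat \<Rightarrow> 'a set"
  assumes inf: "infinite \<Omega>"
    and sub: "\<And>i. i \<in> PosNat \<Longrightarrow> A i \<subseteq> \<Omega>"
  shows
    \<comment> \<open>(1) countable partition\<close>
    "(countable FFt \<and> disjoint_family_on (BU \<Omega> A) FFt
      \<and> (\<forall>U\<in>FFt. BU \<Omega> A U \<inter> Binf A = {})
      \<and> Binf A \<union> (\<Union>U\<in>FFt. BU \<Omega> A U) = \<Omega>)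
    \<comment> \<open>(2)\<close>
    \<and> ((\<Union>i\<in>PosNat. A i) = Binf A \<union> (\<Union>U\<in>FF. BU \<Omega> A U))
    \<comment> \<open>(3)\<close>
    \<and> (\<forall>U\<in>FF. AU A U = AU' A U \<union> (AU A U \<inter> Binf A))
    \<comment> \<open>(4)-(7), in a probability space with sample space \<Omega>\<close>
    \<and> (\<forall>M. prob_space M \<and> space M = \<Omega> \<and> (\<forall>i\<in>PosNat. A i \<in> sets M) \<longrightarrow>
      ((\<exists>k\<in>PosNat. Ssum M A k < \<infinity>) \<longrightarrow> emeasure M (Binf A) = 0)
      \<and> ((\<Sum>j. Tsum M A j) \<le> 1 \<and> ((\<Sum>j. Tsum M A j) = 1 \<longleftrightarrow> emeasure M (Binf A) = 0))
      \<and> (emeasure M (Binf A) = 0 \<longrightarrow>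
           (\<forall>k\<in>PosNat. Ssum M A k = (\<Sum>j. of_nat ((j + k) choose k) * Tsum M A (j + k))))
      \<and> (\<forall>l\<in>PosNat. Ssum M A l < \<infinity> \<longrightarrow>
           (\<forall>k\<in>PosNat. k < l \<longrightarrow> Ssum M A k < \<infinity>)
           \<and> (\<forall>d r k. k \<in> PosNat \<and> 2*d + k + 1 \<le> l \<and> 2*r + k \<le> l \<longrightarrow>
                (\<Sum>j=0..2*d+1. (-1)^j * real ((j + k - 1) choose (k - 1)) * enn2real (Ssum M A (j + k)))
                  \<le> measure M (\<Union>U\<in>FFj k. AU A U)
                \<and> measure M (\<Union>U\<in>FFj k. AU A U)
                  \<le> (\<Sum>j=0..2*r. (-1)^j * real ((j + k - 1) choose (k - 1)) * enn2real (Ssum M A (j + k))))))"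
proof (intro conjI allI impI ballI)
  show "countable FFt"
    by (rule countable_FFt)
  show "disjoint_family_on (BU \<Omega> A) FFt"
    using sub by (rule disjoint_family_on_BU)
  show "BU \<Omega> A U \<inter> Binf A = {}" if "U \<in> FFt" for U
    using sub that by (rule BU_Int_Binf)
  show "Binf A \<union> (\<Union>U\<in>FFt. BU \<Omega> A U) = \<Omega>"
    using sub by (rule Binf_Un_UN_BU)
  show "(\<Union>i\<in>PosNat. A i) = Binf A \<union> (\<Union>U\<in>FF. BU \<Omega> A U)"
    using sub by (rule UN_A_eq_Binf_Un_UN_BU)
  show "AU A U = AU' A U \<union> (AU A U \<inter> Binf A)" for U
    unfolding AU'_def by blast
next
  fix M assume "prob_space M \<and> space M = \<Omega> \<and> (\<forall>i\<in>PosNat. A i \<in> sets M)"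
  then interpret event_sequence M A
    by (simp add: event_sequence_def event_sequence_axioms_def)
  show "emeasure M (Binf A) = 0" if "\<exists>k\<in>PosNat. Ssum M A k < \<infinity>"
    using that Binf_null_if_Ssum_finite by (auto simp: PosNat_def)
  show "(\<Sum>j. Tsum M A j) \<le> 1"
    by (rule suminf_Tsum_le_one)
  show "(\<Sum>j. Tsum M A j) = 1 \<longleftrightarrow> emeasure M (Binf A) = 0"
    by (rule suminf_Tsum_eq_one_iff)
  show "Ssum M A k = (\<Sum>j. of_nat ((j + k) choose k) * Tsum M A (j + k))"
    if "emeasure M (Binf A) = 0" "k \<in> PosNat" for k
    using that Ssum_eq_suminf_Tsum by (simp add: PosNat_def)
  show "Ssum M A k < \<infinity>" if "Ssum M A l < \<infinity>" "k \<in> PosNat" "k < l" for k l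
    using that Ssum_finite_downward by (simp add: PosNat_def)
  show "(\<Sum>j=0..2*d+1. (-1)^j * real ((j + k - 1) choose (k - 1)) * enn2real (Ssum M A (j + k)))
      \<le> measure M (\<Union>U\<in>FFj k. AU A U)"
    if "Ssum M A l < \<infinity>" "k \<in> PosNat \<and> 2*d + k + 1 \<le> l \<and> 2*r + k \<le> l" for l d r k
    using that bonferroni_inequalities(1)[of k l "2*d + 1"] by (simp add: PosNat_def)
  show "measure M (\<Union>U\<in>FFj k. AU A U)
      \<le> (\<Sum>j=0..2*r. (-1)^j * real ((j + k - 1) choose (k - 1)) * enn2real (Ssum M A (j + k)))"
    if "Ssum M A l < \<infinity>" "k \<in> PosNat \<and> 2*d + k + 1 \<le> l \<and> 2*r + k \<le> l" for l d r k
    using that bonferroni_inequalities(2)[of k l "2*r"] by (simp add: PosNat_def)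
qed

end
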